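(* There is a function $C_1(t,\epsilon)$ such that the following holds for every positive integer $t$ and every $\epsilon\in(0,1)$: if $G$ is a bipartite graph with parts $A,B$ which is $\overline{K_{t,t}}$-free and satisfies $|B|\geq \epsilon^{-1}t$, then $A$ contains at most $C_1(t,\epsilon)$ vertices of degree at most $(1-\epsilon)|B|$.
   Context: A bipartite graph with parts $A,B$ is called $\overline{K_{t,t}}$-free if for every $t$-set $A_0\subseteq A$ and every $t$-set $B_0\subseteq B$ there is at least one edge between $A_0$ and $B_0$ (equivalently, the bipartite complement contains no $K_{t,t}$). *)

theory Defs
  imports Complex_Main
begin

definition coKtt_free :: "nat \<Rightarrow> 'v set \<Rightarrow> 'v set \<Rightarrow> ('v \<Rightarrow> 'v \<Rightarrow> bool) \<Rightarrow> bool" where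
  "coKtt_free t A B E \<longleftrightarrow>
     (\<forall>A0 B0. A0 \<subseteq> A \<longrightarrow> B0 \<subseteq> B \<longrightarrow> card A0 = t \<longrightarrow> card B0 = t \<longrightarrow>
        (\<exists>a\<in>A0. \<exists>b\<in>B0. E a b))"

definition bdeg :: "'v set \<Rightarrow> ('v \<Rightarrow> 'v \<Rightarrow> bool) \<Rightarrow> 'v \<Rightarrow> nat" where
  "bdeg B E a = card {b\<in>B. E a b}"

end

theory Submission
  imports Defs
begin

text \<open>
  Every vertex of A of degree at most (1 - \<epsilon>)|B| has at least \<epsilon>|B| non-neighbours in B.
  Choose t vertices of B greedily, each time a common non-neighbour of as many survivors
  among the low-degree vertices as possible. Averaging shows that every step keeps at least
  an \<epsilon>/t fraction of the survivors, so a (\<epsilon>/t)^t fraction of the low-degree vertices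
  has no neighbour among the t chosen vertices. By co-K(t,t)-freeness fewer than t
  vertices survive, so there are fewer than t (t/\<epsilon>)^t low-degree vertices.
\<close>

lemma sum_card_Collect_swap:
  assumes "finite S" "finite B"
  shows "(\<Sum>b\<in>B. card {a\<in>S. P a b}) = (\<Sum>a\<in>S. card {b\<in>B. P a b})"
proof -
  have "(\<Sum>b\<in>B. card {a\<in>S. P a b}) = (\<Sum>b\<in>B. \<Sum>a\<in>S. if P a b then 1 else 0)"
    using assms by (simp add: sum.If_cases Collect_conj_eq Int_commute)
  also have "\<dots> = (\<Sum>a\<in>S. \<Sum>b\<in>B. if P a b then 1 else 0)"
    by (rule sum.swap)
  also have "\<dots> = (\<Sum>a\<in>S. card {b\<in>B. P a b})"
    using assms by (simp add: sum.If_cases Collect_conj_eq Int_commute)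
  finally show ?thesis .
qed

lemma exists_popular_vertex:
  assumes "finite S" "finite B" "B \<noteq> {}"
  shows "\<exists>b\<in>B. (\<Sum>a\<in>S. card {b\<in>B. P a b}) \<le> card B * card {a\<in>S. P a b}"
proof -
  let ?f = "\<lambda>b. card {a\<in>S. P a b}"
  have "(\<Sum>a\<in>S. card {b\<in>B. P a b}) \<le> card B * Max (?f ` B)"
    using sum_le_card_Max[OF \<open>finite B\<close>, of ?f] sum_card_Collect_swap[OF assms(1,2)] by simp
  moreover have "Max (?f ` B) \<in> ?f ` B"
    using assms by simp
  ultimately show ?thesis
    by force
qed

lemma card_Collect_Diff:
  assumes "finite B" "B0 \<subseteq> {b\<in>B. P b}"
  shows "card {b\<in>B - B0. P b} = card {b\<in>B. P b} - card B0"
proof -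
  have "{b\<in>B - B0. P b} = {b\<in>B. P b} - B0"
    by auto
  then show ?thesis
    using assms by (simp add: card_Diff_subset finite_subset)
qed

lemma greedy_biclique_step:
  fixes m r :: real
  assumes "finite B" "B0 \<subseteq> B" "card B0 < card B" "finite S0"
    and common: "\<forall>a\<in>S0. \<forall>b\<in>B0. P a b"
    and many: "\<forall>a\<in>S0. m \<le> real (card {b\<in>B. P a b})"
    and "0 \<le> r" and ratio: "real (card B) - real (card B0) \<le> r * (m - real (card B0))"
  shows "\<exists>b\<in>B - B0. real (card S0) \<le> r * real (card {a\<in>S0. P a b})"
proof -
  define j where "j = card B0"
  define n where "n = real (card B) - real j"
  have "finite B0"
    using assms(1,2) finite_subset by blast
  have "n > 0"
    using assms(3) by (simp add: n_def j_def)
  have card_rest: "real (card (B - B0)) = n"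
    using assms(2,3) \<open>finite B0\<close> by (simp add: card_Diff_subset n_def j_def)
  have "B - B0 \<noteq> {}"
    using card_rest \<open>n > 0\<close> card_gt_0_iff by fastforce
  then obtain b where b: "b \<in> B - B0"
    and popular: "(\<Sum>a\<in>S0. card {b\<in>B - B0. P a b}) \<le> card (B - B0) * card {a\<in>S0. P a b}"
    using exists_popular_vertex[OF \<open>finite S0\<close>] assms(1) by blast
  have B0_subset: "B0 \<subseteq> {b\<in>B. P a b}" if "a \<in> S0" for a
    using common that assms(2) by auto
  have "m - real j \<le> real (card {b\<in>B - B0. P a b})" if "a \<in> S0" for a
    using many that card_Collect_Diff[OF \<open>finite B\<close> B0_subset[OF that]]
      card_mono[OF _ B0_subset[OF that]] assms(1)
    by (simp add: j_def of_nat_diff)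
  then have "real (card S0) * (m - real j) \<le> (\<Sum>a\<in>S0. real (card {b\<in>B - B0. P a b}))"
    using sum_mono[of S0 "\<lambda>_. m - real j"] by (simp add: mult.commute)
  also have "\<dots> = real (\<Sum>a\<in>S0. card {b\<in>B - B0. P a b})"
    by simp
  also have "\<dots> \<le> real (card (B - B0) * card {a\<in>S0. P a b})"
    using popular by (rule of_nat_mono)
  also have "\<dots> = n * real (card {a\<in>S0. P a b})"
    using card_rest by simp
  finally have "r * (real (card S0) * (m - real j)) \<le> r * (n * real (card {a\<in>S0. P a b}))"
    using \<open>0 \<le> r\<close> by (rule mult_left_mono)
  moreover have "real (card S0) * n \<le> real (card S0) * (r * (m - real j))"
    using ratio by (intro mult_left_mono) (simp_all add: n_def j_def)
  ultimately have "real (card S0) * n \<le> r * real (card {a\<in>S0. P a b}) * n"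
    by (simp add: algebra_simps)
  then show ?thesis
    using b \<open>n > 0\<close> by auto
qed

lemma greedy_biclique:
  fixes m r :: real
  assumes "finite S" "finite B"
    and many: "\<forall>a\<in>S. m \<le> real (card {b\<in>B. P a b})"
    and "0 \<le> r" and "k \<le> card B"
    and ratio: "\<forall>j<k. real (card B) - real j \<le> r * (m - real j)"
  shows "\<exists>S0 B0. S0 \<subseteq> S \<and> B0 \<subseteq> B \<and> card B0 = k \<and> (\<forall>a\<in>S0. \<forall>b\<in>B0. P a b)
           \<and> real (card S) \<le> r ^ k * real (card S0)"
  using \<open>k \<le> card B\<close> ratio
proof (induction k)
  case 0
  show ?case
    by (rule exI[of _ S], rule exI[of _ "{}"]) simp
next
  case (Suc k)
  then obtain S0 B0 where S0: "S0 \<subseteq> S" and B0: "B0 \<subseteq> B" "card B0 = k"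
    and common: "\<forall>a\<in>S0. \<forall>b\<in>B0. P a b" and shrink: "real (card S) \<le> r ^ k * real (card S0)"
    by auto
  obtain b where b: "b \<in> B - B0" and step: "real (card S0) \<le> r * real (card {a\<in>S0. P a b})"
    using greedy_biclique_step[where m=m, OF \<open>finite B\<close> B0(1) _ finite_subset[OF S0 \<open>finite S\<close>] common _ \<open>0 \<le> r\<close>]
      many S0 Suc.prems B0(2) by auto
  have "real (card S) \<le> r ^ k * (r * real (card {a\<in>S0. P a b}))"
    using shrink mult_left_mono[OF step, of "r ^ k"] \<open>0 \<le> r\<close> by simp
  then have "real (card S) \<le> r ^ Suc k * real (card {a\<in>S0. P a b})"
    by (simp add: ac_simps)
  moreover have "card (insert b B0) = Suc k"
    using b B0 finite_subset[OF B0(1) \<open>finite B\<close>] by simp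
  ultimately show ?case
    using S0 B0 b common
    by (intro exI[of _ "{a\<in>S0. P a b}"] exI[of _ "insert b B0"]) auto
qed

lemma greedy_ratio_bound:
  fixes \<epsilon> d :: real
  assumes "0 < \<epsilon>" "\<epsilon> \<le> 1" "real t \<le> \<epsilon> * d" "j < t"
  shows "d - real j \<le> real t / \<epsilon> * (\<epsilon> * d - real j)"
proof -
  have "real t / \<epsilon> - 1 \<le> d"
    using assms(1,3) by (simp add: field_simps)
  moreover have "1 \<le> real t / \<epsilon>"
    using assms by (simp add: field_simps)
  ultimately have "real j * (real t / \<epsilon> - 1) \<le> (real t - 1) * d"
    using assms(4) by (intro mult_mono) auto
  then show ?thesis
    using assms(1) by (simp add: algebra_simps)
qed

lemma low_degree_non_neighbours:
  assumes "finite B" "real (bdeg B E a) \<le> (1 - \<epsilon>) * real (card B)"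
  shows "\<epsilon> * real (card B) \<le> real (card {b\<in>B. \<not> E a b})"
proof -
  have "{b\<in>B. \<not> E a b} = B - {b\<in>B. E a b}"
    by auto
  then have "card {b\<in>B. \<not> E a b} = card B - bdeg B E a"
    using assms(1) by (simp add: card_Diff_subset bdeg_def)
  moreover have "bdeg B E a \<le> card B"
    unfolding bdeg_def using assms(1) by (intro card_mono) auto
  ultimately show ?thesis
    using assms(2) by (simp add: algebra_simps)
qed

lemma coKtt_free_biclique_card_less:
  assumes "coKtt_free t A B E" "S0 \<subseteq> A" "B0 \<subseteq> B" "card B0 = t"
    and no_edges: "\<forall>a\<in>S0. \<forall>b\<in>B0. \<not> E a b"
  shows "card S0 < t"
proof (rule ccontr)
  assume "\<not> card S0 < t"
  then obtain A0 where "A0 \<subseteq> S0" "card A0 = t"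
    by (meson not_less obtain_subset_with_card_n)
  moreover have "A0 \<subseteq> A"
    using \<open>A0 \<subseteq> S0\<close> \<open>S0 \<subseteq> A\<close> by blast
  ultimately have "\<exists>a\<in>A0. \<exists>b\<in>B0. E a b"
    using assms(1,3,4) unfolding coKtt_free_def by (elim allE[of _ A0] allE[of _ B0]) simp
  then show False
    using no_edges \<open>A0 \<subseteq> S0\<close> by blast
qed

lemma card_low_degree_le:
  fixes \<epsilon> :: real
  assumes "0 < \<epsilon>" "\<epsilon> < 1" "finite A" "finite B"
    and free: "coKtt_free t A B E" and large: "real t / \<epsilon> \<le> real (card B)"
  shows "real (card {a\<in>A. real (bdeg B E a) \<le> (1 - \<epsilon>) * real (card B)}) \<le> (real t / \<epsilon>) ^ t * real t"
proof -
  define S where "S = {a\<in>A. real (bdeg B E a) \<le> (1 - \<epsilon>) * real (card B)}"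
  have "real t \<le> real t / \<epsilon>"
    using \<open>0 < \<epsilon>\<close> \<open>\<epsilon> < 1\<close> by (simp add: le_divide_eq mult_left_le_one_le mult.commute)
  with large have "t \<le> card B"
    by linarith
  have "real t \<le> \<epsilon> * real (card B)"
    using large \<open>0 < \<epsilon>\<close> by (simp add: field_simps)
  have "\<forall>a\<in>S. \<epsilon> * real (card B) \<le> real (card {b\<in>B. \<not> E a b})"
    using low_degree_non_neighbours[OF \<open>finite B\<close>] by (simp add: S_def)
  moreover have "\<forall>j<t. real (card B) - real j \<le> real t / \<epsilon> * (\<epsilon> * real (card B) - real j)"
    using greedy_ratio_bound \<open>0 < \<epsilon>\<close> \<open>\<epsilon> < 1\<close> \<open>real t \<le> \<epsilon> * real (card B)\<close> by simp
  moreover have "finite S"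
    using \<open>finite A\<close> by (simp add: S_def)
  ultimately obtain S0 B0 where "S0 \<subseteq> S" "B0 \<subseteq> B" "card B0 = t"
    and no_edges: "\<forall>a\<in>S0. \<forall>b\<in>B0. \<not> E a b"
    and shrink: "real (card S) \<le> (real t / \<epsilon>) ^ t * real (card S0)"
    using greedy_biclique[of S B "\<epsilon> * real (card B)" "\<lambda>a b. \<not> E a b" "real t / \<epsilon>" t]
      \<open>finite B\<close> \<open>t \<le> card B\<close> \<open>0 < \<epsilon>\<close> by auto
  have "card S0 < t"
    using coKtt_free_biclique_card_less[OF free _ \<open>B0 \<subseteq> B\<close> \<open>card B0 = t\<close> no_edges] \<open>S0 \<subseteq> S\<close>
    by (auto simp: S_def)
  then have "(real t / \<epsilon>) ^ t * real (card S0) \<le> (real t / \<epsilon>) ^ t * real t"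
    using \<open>0 < \<epsilon>\<close> by (intro mult_left_mono) auto
  then show ?thesis
    using shrink unfolding S_def by linarith
qed

theorem mainTheorem3:
  shows "\<exists>C1 :: nat \<Rightarrow> real \<Rightarrow> real. \<forall>(t::nat) (\<epsilon>::real) (A::nat set) (B::nat set) (E::nat \<Rightarrow> nat \<Rightarrow> bool).
     t > 0 \<longrightarrow> 0 < \<epsilon> \<longrightarrow> \<epsilon> < 1 \<longrightarrow>
     finite A \<longrightarrow> finite B \<longrightarrow> A \<inter> B = {} \<longrightarrow>
     coKtt_free t A B E \<longrightarrow> real (card B) \<ge> t / \<epsilon> \<longrightarrow>
     real (card {a\<in>A. real (bdeg B E a) \<le> (1 - \<epsilon>) * real (card B)}) \<le> C1 t \<epsilon>"
  by (intro exI[of _ "\<lambda>t \<epsilon>. (real t / \<epsilon>) ^ t * real t"] allI impI card_low_degree_le)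

end
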